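(* Let $F(x,y)=\sum_{i=0}^2\sum_{j=0}^2 c_{i,j}x^iy^j=Y_0(y)+xY_1(y)+x^2Y_2(y)$ be a biquadratic polynomial. Define $$\mathcal R(\Sigma,\Pi)=\operatorname{Res}_y\big(\Sigma\,Y_2(y)+Y_1(y),\ \Pi\,Y_2(y)-Y_0(y)\big),$$ the resultant (Sylvester $4\times4$ determinant) with respect to $y$ of these two polynomials of degree $\le 2$ in $y$. Then $\mathcal R$ is a polynomial of total degree at most $2$ in $(\Sigma,\Pi)$; i.e. the coefficients of $\Sigma^2\Pi^2$, $\Sigma^2\Pi$ and $\Sigma\Pi^2$ vanish. Consequently $E(x,z):=\mathcal R(x+z,xz)$ is a symmetric biquadratic polynomial, $E(x,z)=\sum_{i,j=0}^2 e_{i,j}x^iz^j$ with $e_{i,j}=e_{j,i}$, and for every elliptic sequence $(x_n,y_n)_{n\in\mathbb Z}$ on $F$ with $Y_2(y_n)\neq0$ for all $n$, one has $E(x_n,x_{n+1})=0$ for all $n\in\mathbb Z$.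
   Context: Write $Y_i(y)=\sum_{j=0}^2 c_{i,j}y^j$ and $X_j(x)=\sum_{i=0}^2 c_{i,j}x^i$, so that $F(x,y)=Y_0(y)+xY_1(y)+x^2Y_2(y)=X_0(x)+yX_1(x)+y^2X_2(x)$. An elliptic sequence on $F$ is a doubly infinite sequence of points $(x_n,y_n)_{n\in\mathbb Z}$ such that for every $n$, $x_n$ and $x_{n+1}$ are the two roots (with multiplicity) of the quadratic polynomial $x\mapsto F(x,y_n)$, and $y_{n-1}$ and $y_n$ are the two roots of $y\mapsto F(x_n,y)$. In particular $F(x_n,y_n)=F(x_{n+1},y_n)=0$, $x_n+x_{n+1}=-Y_1(y_n)/Y_2(y_n)$ and $x_nx_{n+1}=Y_0(y_n)/Y_2(y_n)$ whenever $Y_2(y_n)\ne0$. *)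

theory Defs
  imports "HOL-Combinatorics.Permutations" "HOL-Computational_Algebra.Polynomial"
begin

definition Ycoef :: "(nat \<Rightarrow> nat \<Rightarrow> 'a::comm_ring_1) \<Rightarrow> nat \<Rightarrow> 'a \<Rightarrow> 'a" where
  "Ycoef c i y = (\<Sum>j\<le>2. c i j * y ^ j)"

definition Xcoef :: "(nat \<Rightarrow> nat \<Rightarrow> 'a::comm_ring_1) \<Rightarrow> nat \<Rightarrow> 'a \<Rightarrow> 'a" where
  "Xcoef c j x = (\<Sum>i\<le>2. c i j * x ^ i)"

definition Fbq :: "(nat \<Rightarrow> nat \<Rightarrow> 'a::comm_ring_1) \<Rightarrow> 'a \<Rightarrow> 'a \<Rightarrow> 'a" where
  "Fbq c x y = (\<Sum>i\<le>2. \<Sum>j\<le>2. c i j * x ^ i * y ^ j)"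

definition two_roots :: "'a::field poly \<Rightarrow> 'a \<Rightarrow> 'a \<Rightarrow> bool" where
  "two_roots q u v \<longleftrightarrow> degree q = 2 \<and> q = smult (lead_coeff q) ([:-u, 1:] * [:-v, 1:])"

definition elliptic_seq :: "(nat \<Rightarrow> nat \<Rightarrow> 'a::field) \<Rightarrow> (int \<Rightarrow> 'a) \<Rightarrow> (int \<Rightarrow> 'a) \<Rightarrow> bool" where
  "elliptic_seq c xs ys \<longleftrightarrow>
     (\<forall>n. two_roots [:Ycoef c 0 (ys n), Ycoef c 1 (ys n), Ycoef c 2 (ys n):] (xs n) (xs (n + 1))
        \<and> two_roots [:Xcoef c 0 (xs n), Xcoef c 1 (xs n), Xcoef c 2 (xs n):] (ys (n - 1)) (ys n))"

definition det4 :: "(nat \<Rightarrow> nat \<Rightarrow> 'b::comm_ring_1) \<Rightarrow> 'b" where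
  "det4 M = (\<Sum>p | p permutes {..<4}. of_int (sign p) * (\<Prod>i<4. M i (p i)))"

definition sylv2 :: "'b \<Rightarrow> 'b \<Rightarrow> 'b \<Rightarrow> 'b \<Rightarrow> 'b \<Rightarrow> 'b \<Rightarrow> nat \<Rightarrow> nat \<Rightarrow> 'b::zero" where
  "sylv2 a0 a1 a2 b0 b1 b2 i j =
     (if i = 0 then [a2, a1, a0, 0] ! j
      else if i = 1 then [0, a2, a1, a0] ! j
      else if i = 2 then [b2, b1, b0, 0] ! j
      else [0, b2, b1, b0] ! j)"

definition res2 :: "'b \<Rightarrow> 'b \<Rightarrow> 'b \<Rightarrow> 'b \<Rightarrow> 'b \<Rightarrow> 'b \<Rightarrow> 'b::comm_ring_1" where
  "res2 a0 a1 a2 b0 b1 b2 = det4 (sylv2 a0 a1 a2 b0 b1 b2)"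

text \<open>R(Sigma,Pi) as a bivariate polynomial: outer variable Sigma, inner variable Pi,
  so the coefficient of Sigma^i Pi^j is coeff (coeff R i) j.\<close>
definition Rpoly :: "(nat \<Rightarrow> nat \<Rightarrow> 'a::comm_ring_1) \<Rightarrow> 'a poly poly" where
  "Rpoly c = (let S = [:0, 1:]; P = [:[:0, 1:]:]; K = (\<lambda>a. [:[:a:]:]) in
     res2 (S * K (c 2 0) + K (c 1 0)) (S * K (c 2 1) + K (c 1 1)) (S * K (c 2 2) + K (c 1 2))
          (P * K (c 2 0) - K (c 0 0)) (P * K (c 2 1) - K (c 0 1)) (P * K (c 2 2) - K (c 0 2)))"

text \<open>E(x,z) = R(x+z, xz) as a bivariate polynomial: inner variable x, outer variable z,
  so the coefficient of x^i z^j is coeff (coeff E j) i.\<close>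
definition Epoly :: "(nat \<Rightarrow> nat \<Rightarrow> 'a::comm_ring_1) \<Rightarrow> 'a poly poly" where
  "Epoly c = (let X = [:[:0, 1:]:]; Z = [:0, 1:] in
     poly (map_poly (\<lambda>q. poly (map_poly (\<lambda>a. [:[:a:]:]) q) (X * Z)) (Rpoly c)) (X + Z))"

definition Eval :: "(nat \<Rightarrow> nat \<Rightarrow> 'a::comm_ring_1) \<Rightarrow> 'a \<Rightarrow> 'a \<Rightarrow> 'a" where
  "Eval c x z = poly (poly (Epoly c) [:z:]) x"

end

theory Submission
  imports Defs
begin

(*
  Write a_k = Sigma A_k + B_k and b_k = Pi A_k - C_k, with A = c 2, B = c 1, C = c 0, for the
  coefficients of the two quadratics in y. The resultant of two quadratics is
  m_20^2 - m_21 m_10 in the minors m_kl = a_k b_l - a_l b_k, and in every minor the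
  Sigma Pi-terms cancel: each minor is affine in (Sigma, Pi), so R has total degree at most 2.
  Substituting Sigma = x + z, Pi = x z into a polynomial of total degree 2 gives a symmetric
  biquadratic. Along an elliptic sequence, Vieta's formulas for x |-> F(x, y_n) say that y_n is a
  common root of Sigma Y_2 + Y_1 and Pi Y_2 - Y_0 at Sigma = x_n + x_(n+1), Pi = x_n x_(n+1),
  and the resultant vanishes at a common root by its Bezout identity.
*)

lemma sum_atMost_2: "(\<Sum>i\<le>2::nat. f i) = f 0 + f 1 + f 2"
  by (simp add: numeral_2_eq_2 atMost_Suc add_ac)

lemma sum_permutes_insert_signed:
  assumes "finite S" "a \<notin> S"
  shows "(\<Sum>p | p permutes insert a S. of_int (sign p) * g p) =
    (\<Sum>b\<in>insert a S. of_int (sign (transpose a b)) *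
       (\<Sum>q | q permutes S. of_int (sign q) * g (transpose a b \<circ> q)) :: 'b::comm_ring_1)"
proof -
  have "sign (transpose a b \<circ> q) = sign (transpose a b) * sign q" if "q permutes S" for b q
    using that assms(1) by (metis permutation_permutes permutation_swap_id sign_compose)
  then show ?thesis
    by (simp add: sum_over_permutations_insert[OF assms] sum_distrib_left mult.assoc)
qed

lemma sum_permutes_4_signed:
  "(\<Sum>p | p permutes {..<4::nat}. of_int (sign p) * g p) =
    (\<Sum>b0\<in>{0, 1, 2, 3}. of_int (sign (transpose 0 b0)) *
     (\<Sum>b1\<in>{1, 2, 3}. of_int (sign (transpose 1 b1)) *
      (\<Sum>b2\<in>{2, 3::nat}. of_int (sign (transpose 2 b2)) *
        g (transpose 0 b0 \<circ> (transpose 1 b1 \<circ> transpose 2 b2)))) :: 'b::comm_ring_1)"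
proof -
  have "{..<4::nat} = insert 0 (insert 1 (insert 2 (insert 3 {})))"
    by auto
  moreover have "(\<Sum>q | q permutes insert (3::nat) {}. of_int (sign q) * h q) = (h id :: 'b)" for h
    by (subst sum_permutes_insert_signed) auto
  ultimately show ?thesis
    by (simp add: sum_permutes_insert_signed)
qed

lemma res2_closed_form:
  "res2 a0 a1 a2 b0 b1 b2 = (a2*b0 - a0*b2)^2 - (a2*b1 - a1*b2) * (a1*b0 - a0*b1)"
  unfolding res2_def det4_def sum_permutes_4_signed
  by (simp add: sign_swap_id transpose_def sylv2_def lessThan_Suc_eq_insert_0 numeral_eq_Suc)
     (simp add: algebra_simps power2_eq_square)

(* The cofactors combine b_2 a(y) - a_2 b(y) and b_1 a(y) - a_1 b(y). *)
lemma res2_bezout: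
  "res2 a0 a1 a2 b0 b1 b2 =
     (((a2*b1 - a1*b2) * y - (a2*b0 - a0*b2)) * b2 + (a2*b1 - a1*b2) * b1) * (a0 + a1*y + a2*y^2)
   - (((a2*b1 - a1*b2) * y - (a2*b0 - a0*b2)) * a2 + (a2*b1 - a1*b2) * a1) * (b0 + b1*y + b2*y^2)"
  by (simp add: res2_closed_form algebra_simps power2_eq_square)

lemma res2_eq_0_if_common_root:
  "a0 + a1*y + a2*y^2 = 0 \<Longrightarrow> b0 + b1*y + b2*y^2 = 0 \<Longrightarrow> res2 a0 a1 a2 b0 b1 b2 = 0"
  by (simp add: res2_bezout[where y = y])

(* The minor a_k b_l - a_l b_k of a_k = s A_k + B_k, b_k = p A_k - C_k: its s p-terms cancel. *)
definition pencil_minor ::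
    "'a \<Rightarrow> 'a \<Rightarrow> (nat \<Rightarrow> 'a) \<Rightarrow> (nat \<Rightarrow> 'a) \<Rightarrow> (nat \<Rightarrow> 'a) \<Rightarrow> nat \<Rightarrow> nat \<Rightarrow> 'a::comm_ring_1" where
  "pencil_minor s p A B C k l =
     s * (A l * C k - A k * C l) + p * (A l * B k - A k * B l) + (B l * C k - B k * C l)"

lemma res2_pencil:
  "res2 (s * A 0 + B 0) (s * A 1 + B 1) (s * A 2 + B 2) (p * A 0 - C 0) (p * A 1 - C 1) (p * A 2 - C 2) =
     (pencil_minor s p A B C 2 0)^2 - pencil_minor s p A B C 2 1 * pencil_minor s p A B C 1 0"
  by (simp add: res2_closed_form pencil_minor_def algebra_simps power2_eq_square)

definition total_degree_le :: "'a::zero poly poly \<Rightarrow> nat \<Rightarrow> bool" where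
  "total_degree_le R d \<longleftrightarrow> (\<forall>i j. d < i + j \<longrightarrow> coeff (coeff R i) j = 0)"

lemma total_degree_le_add:
  "total_degree_le P d \<Longrightarrow> total_degree_le Q d \<Longrightarrow> total_degree_le (P + Q) d"
  by (simp add: total_degree_le_def)

lemma total_degree_le_diff:
  fixes P Q :: "'a::ab_group_add poly poly"
  shows "total_degree_le P d \<Longrightarrow> total_degree_le Q d \<Longrightarrow> total_degree_le (P - Q) d"
  by (simp add: total_degree_le_def)

lemma total_degree_le_const: "total_degree_le [:[:a:]:] 0"
  by (auto simp: total_degree_le_def coeff_pCons split: nat.split)

lemma total_degree_le_outer_var: "total_degree_le [:0, 1:] 1"
  by (auto simp: total_degree_le_def coeff_pCons split: nat.split)

lemma total_degree_le_inner_var: "total_degree_le [:[:0, 1:]:] 1"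
  by (auto simp: total_degree_le_def coeff_pCons split: nat.split)

lemma total_degree_le_mult:
  fixes P Q :: "'a::comm_semiring_0 poly poly"
  assumes "total_degree_le P d" "total_degree_le Q e" "d + e \<le> n"
  shows "total_degree_le (P * Q) n"
  unfolding total_degree_le_def
proof (intro allI impI)
  fix i j assume "n < i + j"
  have "coeff (coeff (P * Q) i) j =
    (\<Sum>k\<le>i. \<Sum>l\<le>j. coeff (coeff P k) l * coeff (coeff Q (i - k)) (j - l))"
    by (simp add: coeff_mult coeff_sum)
  also have "\<dots> = 0"
  proof (intro sum.neutral ballI)
    fix k l assume "k \<in> {..i}" "l \<in> {..j}"
    with \<open>n < i + j\<close> \<open>d + e \<le> n\<close> have "d < k + l \<or> e < (i - k) + (j - l)" by auto
    with assms show "coeff (coeff P k) l * coeff (coeff Q (i - k)) (j - l) = 0"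
      unfolding total_degree_le_def by auto
  qed
  finally show "coeff (coeff (P * Q) i) j = 0" .
qed

lemma total_degree_le_expansion:
  assumes "total_degree_le R d"
  shows "R = (\<Sum>i\<le>d. \<Sum>j\<le>d. monom (monom (coeff (coeff R i) j) j) i)"
proof -
  have inner: "degree (coeff R i) \<le> d" for i
    using assms by (intro degree_le) (auto simp: total_degree_le_def)
  have "degree R \<le> d"
    using assms by (intro degree_le allI impI poly_eqI) (auto simp: total_degree_le_def)
  then have "R = (\<Sum>i\<le>d. monom (coeff R i) i)"
    by (simp add: poly_as_sum_of_monoms')
  also have "\<dots> = (\<Sum>i\<le>d. monom (\<Sum>j\<le>d. monom (coeff (coeff R i) j) j) i)"
    by (simp add: poly_as_sum_of_monoms' inner)
  finally show ?thesis
    by (simp add: monom_sum)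
qed

lemma map_poly_add:
  assumes "f 0 = 0" "\<And>a b. f (a + b) = f a + f b"
  shows "map_poly f (p + q) = map_poly f p + map_poly f q"
  using assms by (intro poly_eqI) (simp add: coeff_map_poly)

lemma map_poly_sum:
  assumes "f 0 = 0" "\<And>a b. f (a + b) = f a + f b"
  shows "map_poly f (\<Sum>x\<in>A. g x) = (\<Sum>x\<in>A. map_poly f (g x))"
  using sum_comp_morphism[of "map_poly f" g A] map_poly_add[of f, OF assms]
  by (simp add: o_def)

lemma poly_map_poly_total_degree_le:
  fixes \<kappa> :: "'a::comm_semiring_1 \<Rightarrow> 'b::comm_semiring_1"
  assumes R: "total_degree_le R d"
    and \<kappa>: "\<kappa> 0 = 0" "\<And>a b. \<kappa> (a + b) = \<kappa> a + \<kappa> b"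
  shows "poly (map_poly (\<lambda>q. poly (map_poly \<kappa> q) p) R) s =
    (\<Sum>i\<le>d. \<Sum>j\<le>d. \<kappa> (coeff (coeff R i) j) * s ^ i * p ^ j)"
proof -
  define f where "f = (\<lambda>q. poly (map_poly \<kappa> q) p)"
  have f: "f 0 = 0" "\<And>a b. f (a + b) = f a + f b"
    by (simp_all add: f_def map_poly_add[of \<kappa>, OF \<kappa>])
  have "poly (map_poly f R) s =
    poly (map_poly f (\<Sum>i\<le>d. \<Sum>j\<le>d. monom (monom (coeff (coeff R i) j) j) i)) s"
    by (subst total_degree_le_expansion[OF R]) (rule refl)
  also have "\<dots> = (\<Sum>i\<le>d. \<Sum>j\<le>d. \<kappa> (coeff (coeff R i) j) * s ^ i * p ^ j)"
    by (simp add: map_poly_sum[of f, OF f] map_poly_monom f poly_sum poly_monom)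
       (simp add: f_def map_poly_monom \<kappa> poly_monom mult_ac)
  finally show ?thesis
    unfolding f_def .
qed

lemma poly_poly_total_degree_le:
  fixes R :: "'a::comm_semiring_1 poly poly"
  assumes "total_degree_le R d"
  shows "poly (poly R [:s:]) p = (\<Sum>i\<le>d. \<Sum>j\<le>d. coeff (coeff R i) j * s ^ i * p ^ j)"
  by (subst total_degree_le_expansion[OF assms]) (simp add: poly_sum poly_monom mult_ac)

lemma total_degree_le_res2_pencil:
  fixes s p :: "'a::comm_ring_1 poly poly" and A B C :: "nat \<Rightarrow> 'a poly poly"
  assumes "total_degree_le s 1" "total_degree_le p 1"
    and "\<And>k. total_degree_le (A k) 0" "\<And>k. total_degree_le (B k) 0" "\<And>k. total_degree_le (C k) 0"
  shows "total_degree_le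
    (res2 (s * A 0 + B 0) (s * A 1 + B 1) (s * A 2 + B 2) (p * A 0 - C 0) (p * A 1 - C 1) (p * A 2 - C 2)) 2"
proof -
  have minor: "total_degree_le (pencil_minor s p A B C k l) 1" for k l
    unfolding pencil_minor_def
    by (intro total_degree_le_add total_degree_le_diff
          total_degree_le_mult[where d = 1 and e = 0] total_degree_le_mult[where d = 0 and e = 0] assms)
       simp_all
  show ?thesis
    unfolding res2_pencil power2_eq_square
    by (intro total_degree_le_diff total_degree_le_mult[OF minor minor]) simp_all
qed

lemma total_degree_le_Rpoly: "total_degree_le (Rpoly c) 2"
  unfolding Rpoly_def Let_def
  by (rule total_degree_le_res2_pencil[where A = "\<lambda>k. [:[:c 2 k:]:]" and B = "\<lambda>k. [:[:c 1 k:]:]"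
        and C = "\<lambda>k. [:[:c 0 k:]:]"])
     (rule total_degree_le_outer_var total_degree_le_inner_var total_degree_le_const)+

definition sym_subst_coeff :: "(nat \<Rightarrow> nat \<Rightarrow> 'a) \<Rightarrow> nat \<Rightarrow> nat \<Rightarrow> 'a::comm_ring_1" where
  "sym_subst_coeff q i j =
     (if i \<le> 2 \<and> j \<le> 2 then
        [[q 0 0, q 1 0,              q 2 0],
         [q 1 0, q 0 1 + 2 * q 2 0, q 1 1],
         [q 2 0, q 1 1,              q 0 2]] ! i ! j
      else 0)"

lemma sym_subst_coeff_commute: "sym_subst_coeff q i j = sym_subst_coeff q j i"
  by (auto simp: sym_subst_coeff_def le_Suc_eq numeral_2_eq_2)

lemma sym_subst_coeff_const:
  "[:[:sym_subst_coeff q i j:]:] = sym_subst_coeff (\<lambda>i j. [:[:q i j:]:]) i j"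
  by (auto simp: sym_subst_coeff_def le_Suc_eq numeral_2_eq_2 numeral_poly)

lemma sum_subst_sym:
  fixes x z :: "'a::comm_ring_1"
  assumes "\<And>i j. 2 < i + j \<Longrightarrow> q i j = 0"
  shows "(\<Sum>i\<le>2. \<Sum>j\<le>2. q i j * (x + z) ^ i * (x * z) ^ j) =
    (\<Sum>i\<le>2. \<Sum>j\<le>2. sym_subst_coeff q i j * x ^ i * z ^ j)"
proof -
  have "(\<Sum>i\<le>2. \<Sum>j\<le>2. q i j * (x + z) ^ i * (x * z) ^ j) =
    q 0 0 + q 1 0 * (x + z) + q 0 1 * (x * z) + q 2 0 * (x + z)^2 + q 1 1 * (x + z) * (x * z)
      + q 0 2 * (x * z)^2"
    using assms[of 2 1] assms[of 1 2] assms[of 2 2] by (simp add: sum_atMost_2)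
  also have "\<dots> = q 0 0 + q 1 0 * x + q 1 0 * z + q 2 0 * x^2 + (q 0 1 + 2 * q 2 0) * (x * z)
      + q 2 0 * z^2 + q 1 1 * x^2 * z + q 1 1 * x * z^2 + q 0 2 * x^2 * z^2"
    by (simp add: algebra_simps power2_eq_square)
  also have "\<dots> = (\<Sum>i\<le>2. \<Sum>j\<le>2. sym_subst_coeff q i j * x ^ i * z ^ j)"
    by (simp add: sum_atMost_2 sym_subst_coeff_def algebra_simps)
  finally show ?thesis .
qed

lemma Epoly_eq_subst:
  "Epoly c = (\<Sum>i\<le>2. \<Sum>j\<le>2. [:[:coeff (coeff (Rpoly c) i) j:]:]
      * ([:[:0, 1:]:] + [:0, 1:]) ^ i * ([:[:0, 1:]:] * [:0, 1:]) ^ j)"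
  unfolding Epoly_def Let_def
  by (rule poly_map_poly_total_degree_le[OF total_degree_le_Rpoly]) simp_all

lemma monom_monom_eq_const_mult:
  fixes a :: "'a::comm_semiring_1"
  shows "monom (monom a i) j = [:[:a:]:] * [:[:0, 1:]:] ^ i * [:0, 1:] ^ j"
proof -
  have "[:0, 1:] = (monom 1 1 :: 'a poly poly)" "[:[:0, 1:]:] = (monom (monom 1 1) 0 :: 'a poly poly)"
    "[:[:a:]:] = monom (monom a 0) 0"
    by (simp_all add: monom_Suc monom_0)
  then show ?thesis
    by (simp only:) (simp add: monom_power mult_monom)
qed

lemma Epoly_eq_sym:
  "Epoly c = (\<Sum>i\<le>2. \<Sum>j\<le>2. monom (monom (sym_subst_coeff (\<lambda>i j. coeff (coeff (Rpoly c) i) j) i j) i) j)"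
proof -
  define r where "r i j = coeff (coeff (Rpoly c) i) j" for i j
  have "Epoly c = (\<Sum>i\<le>2. \<Sum>j\<le>2. [:[:r i j:]:] * ([:[:0, 1:]:] + [:0, 1:]) ^ i * ([:[:0, 1:]:] * [:0, 1:]) ^ j)"
    unfolding Epoly_eq_subst r_def ..
  also have "\<dots> = (\<Sum>i\<le>2. \<Sum>j\<le>2. sym_subst_coeff (\<lambda>i j. [:[:r i j:]:]) i j * [:[:0, 1:]:] ^ i * [:0, 1:] ^ j)"
    using total_degree_le_Rpoly[of c] by (intro sum_subst_sym) (simp add: total_degree_le_def r_def)
  also have "\<dots> = (\<Sum>i\<le>2. \<Sum>j\<le>2. monom (monom (sym_subst_coeff r i j) i) j)"
    by (simp only: monom_monom_eq_const_mult sym_subst_coeff_const)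
  finally show ?thesis
    unfolding r_def .
qed

lemma poly_poly_Rpoly:
  "poly (poly (Rpoly c) [:s:]) p =
    res2 (s * c 2 0 + c 1 0) (s * c 2 1 + c 1 1) (s * c 2 2 + c 1 2)
         (p * c 2 0 - c 0 0) (p * c 2 1 - c 0 1) (p * c 2 2 - c 0 2)"
  unfolding Rpoly_def Let_def res2_closed_form by (simp add: algebra_simps)

lemma Eval_eq_Rpoly: "Eval c x z = poly (poly (Rpoly c) [:x + z:]) (x * z)"
  unfolding Eval_def Epoly_eq_subst poly_poly_total_degree_le[OF total_degree_le_Rpoly]
  by (simp add: poly_sum mult_ac add_ac)

lemma two_roots_coeffs:
  fixes Y0 Y1 Y2 u v :: "'a::field"
  assumes "two_roots [:Y0, Y1, Y2:] u v" "Y2 \<noteq> 0"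
  shows "Y0 = Y2 * (u * v)" "Y1 = - (Y2 * (u + v))"
proof -
  have "[:Y0, Y1, Y2:] = smult Y2 ([:-u, 1:] * [:-v, 1:])"
    using assms unfolding two_roots_def by simp
  then have "coeff [:Y0, Y1, Y2:] 0 = coeff (smult Y2 ([:-u, 1:] * [:-v, 1:])) 0"
    and "coeff [:Y0, Y1, Y2:] 1 = coeff (smult Y2 ([:-u, 1:] * [:-v, 1:])) 1"
    by simp_all
  then show "Y0 = Y2 * (u * v)" "Y1 = - (Y2 * (u + v))"
    by (simp_all add: algebra_simps)
qed

lemma Eval_elliptic_seq_eq_0:
  fixes c :: "nat \<Rightarrow> nat \<Rightarrow> 'a::field"
  assumes "elliptic_seq c xs ys" "Ycoef c 2 (ys n) \<noteq> 0"
  shows "Eval c (xs n) (xs (n + 1)) = 0"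
proof -
  define u v y where "u = xs n" and "v = xs (n + 1)" and "y = ys n"
  have "two_roots [:Ycoef c 0 y, Ycoef c 1 y, Ycoef c 2 y:] u v"
    using assms(1) unfolding elliptic_seq_def u_def v_def y_def by blast
  from two_roots_coeffs[OF this] assms(2)
  have vieta: "Ycoef c 0 y = Ycoef c 2 y * (u * v)" "Ycoef c 1 y = - (Ycoef c 2 y * (u + v))"
    by (simp_all add: y_def)
  have "(u + v) * Ycoef c 2 y + Ycoef c 1 y = 0" "u * v * Ycoef c 2 y - Ycoef c 0 y = 0"
    unfolding vieta by (simp_all add: algebra_simps)
  then have "((u + v) * c 2 0 + c 1 0) + ((u + v) * c 2 1 + c 1 1) * y + ((u + v) * c 2 2 + c 1 2) * y^2 = 0"
    and "(u * v * c 2 0 - c 0 0) + (u * v * c 2 1 - c 0 1) * y + (u * v * c 2 2 - c 0 2) * y^2 = 0"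
    by (simp_all add: Ycoef_def sum_atMost_2 algebra_simps)
  then have "Eval c u v = 0"
    unfolding Eval_eq_Rpoly poly_poly_Rpoly by (rule res2_eq_0_if_common_root)
  then show ?thesis
    unfolding u_def v_def .
qed

theorem mainTheorem1:
  fixes c :: "nat \<Rightarrow> nat \<Rightarrow> 'a::field"
  shows "(\<forall>i j. 2 < i + j \<longrightarrow> coeff (coeff (Rpoly c) i) j = 0)
    \<and> (\<exists>e :: nat \<Rightarrow> nat \<Rightarrow> 'a. (\<forall>i j. e i j = e j i)
          \<and> Epoly c = (\<Sum>i\<le>2. \<Sum>j\<le>2. monom (monom (e i j) i) j))
    \<and> (\<forall>xs ys. elliptic_seq c xs ys \<and> (\<forall>n. Ycoef c 2 (ys n) \<noteq> 0)
          \<longrightarrow> (\<forall>n. Eval c (xs n) (xs (n + 1)) = 0))"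
proof (intro conjI allI impI)
  show "\<And>i j. 2 < i + j \<Longrightarrow> coeff (coeff (Rpoly c) i) j = 0"
    using total_degree_le_Rpoly unfolding total_degree_le_def by blast
  show "\<exists>e. (\<forall>i j. e i j = e j i) \<and> Epoly c = (\<Sum>i\<le>2. \<Sum>j\<le>2. monom (monom (e i j) i) j)"
    using sym_subst_coeff_commute Epoly_eq_sym by blast
  show "\<And>xs ys n. elliptic_seq c xs ys \<and> (\<forall>n. Ycoef c 2 (ys n) \<noteq> 0) \<Longrightarrow>
      Eval c (xs n) (xs (n + 1)) = 0"
    using Eval_elliptic_seq_eq_0 by blast
qed

end
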